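(* Let $G$ be a $6$-regular graph, $\mathcal S$ a canonical path partition of $G$, and $P$ a path component with end-vertices $o_1,o_2$. Let $x_1,x_2\in V_2$ be path neighbors on $P$, with $x_1$ immediately preceding $x_2$ when $P$ is traversed from $o_1$ to $o_2$. If $x_1$ goes to a vertex of a cycle component $C$, then every vertex that $x_2$ goes to is either $o_2$ or a vertex of $C$.
   Context: All graphs are finite, simple and undirected. A path partition of $G=(V,E)$ is a set of vertex-disjoint paths (single vertices allowed) covering $V$; its members are components. A component with $t\ge3$ vertices is a cycle component if the subgraph induced on its vertex set has a spanning cycle; a one-vertex component is an isolated vertex; every other component is a path component. A path partition is canonical if (1) it has the minimum number of components among all path partitions of $G$; (2) among those, it has the maximum number of cycle components; (3) it has no isolated vertices. Given a canonical path partition $\mathcal S$ of $G$: two vertices are path neighbors if they are consecutive on a path component. An edge of $G$ is a free edge unless it joins two path neighbors or has both endpoints in the same cycle component. $V_1$ is the set of end-vertices of path components together with all vertices of cycle components. $V_2$ is the set of vertices not in $V_1$ that are joined by a free edge to a vertex of $V_1$. A balanced edge is a free edge with one endpoint in $V_1$ and the other in $V_2$; for $x\in V_2$, $y\in V_1$ we say $x$ goes to $y$ if $xy$ is a balanced edge. *)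

theory Defs
  imports Main
begin

definition simple_graph :: "'a set \<Rightarrow> ('a \<Rightarrow> 'a \<Rightarrow> bool) \<Rightarrow> bool" where
  "simple_graph V E \<longleftrightarrow> finite V \<and> (\<forall>x y. E x y \<longrightarrow> E y x) \<and> (\<forall>x. \<not> E x x)
     \<and> (\<forall>x y. E x y \<longrightarrow> x \<in> V \<and> y \<in> V)"

definition regular :: "nat \<Rightarrow> 'a set \<Rightarrow> ('a \<Rightarrow> 'a \<Rightarrow> bool) \<Rightarrow> bool" where
  "regular k V E \<longleftrightarrow> (\<forall>v\<in>V. card {u. E v u} = k)"

definition is_path :: "('a \<Rightarrow> 'a \<Rightarrow> bool) \<Rightarrow> 'a list \<Rightarrow> bool" where
  "is_path E p \<longleftrightarrow> p \<noteq> [] \<and> distinct p \<and> (\<forall>i. Suc i < length p \<longrightarrow> E (p ! i) (p ! Suc i))"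

text \<open>A path partition: a set of vertex-disjoint paths covering V.  Each component
  is represented by one list (one of its two traversal orders).\<close>
definition path_partition :: "'a set \<Rightarrow> ('a \<Rightarrow> 'a \<Rightarrow> bool) \<Rightarrow> 'a list set \<Rightarrow> bool" where
  "path_partition V E S \<longleftrightarrow> finite S \<and> (\<forall>p\<in>S. is_path E p)
     \<and> (\<forall>p\<in>S. \<forall>q\<in>S. p \<noteq> q \<longrightarrow> set p \<inter> set q = {})
     \<and> (\<Union>p\<in>S. set p) = V"

definition has_spanning_cycle :: "('a \<Rightarrow> 'a \<Rightarrow> bool) \<Rightarrow> 'a set \<Rightarrow> bool" where
  "has_spanning_cycle E A \<longleftrightarrow> (\<exists>q. distinct q \<and> set q = A \<and> 3 \<le> length q
     \<and> (\<forall>i. Suc i < length q \<longrightarrow> E (q ! i) (q ! Suc i)) \<and> E (last q) (hd q))"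

definition cycle_comp :: "('a \<Rightarrow> 'a \<Rightarrow> bool) \<Rightarrow> 'a list \<Rightarrow> bool" where
  "cycle_comp E p \<longleftrightarrow> 3 \<le> length p \<and> has_spanning_cycle E (set p)"

definition isolated_comp :: "'a list \<Rightarrow> bool" where
  "isolated_comp p \<longleftrightarrow> length p = 1"

definition path_comp :: "('a \<Rightarrow> 'a \<Rightarrow> bool) \<Rightarrow> 'a list \<Rightarrow> bool" where
  "path_comp E p \<longleftrightarrow> \<not> cycle_comp E p \<and> \<not> isolated_comp p"

definition num_cycle_comps :: "('a \<Rightarrow> 'a \<Rightarrow> bool) \<Rightarrow> 'a list set \<Rightarrow> nat" where
  "num_cycle_comps E S = card {p\<in>S. cycle_comp E p}"

definition canonical :: "'a set \<Rightarrow> ('a \<Rightarrow> 'a \<Rightarrow> bool) \<Rightarrow> 'a list set \<Rightarrow> bool" where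
  "canonical V E S \<longleftrightarrow> path_partition V E S
     \<and> (\<forall>S'. path_partition V E S' \<longrightarrow> card S \<le> card S')
     \<and> (\<forall>S'. path_partition V E S' \<and> card S' = card S \<longrightarrow> num_cycle_comps E S' \<le> num_cycle_comps E S)
     \<and> (\<forall>p\<in>S. \<not> isolated_comp p)"

definition path_neighbors :: "('a \<Rightarrow> 'a \<Rightarrow> bool) \<Rightarrow> 'a list set \<Rightarrow> 'a \<Rightarrow> 'a \<Rightarrow> bool" where
  "path_neighbors E S x y \<longleftrightarrow> (\<exists>p\<in>S. path_comp E p \<and>
     (\<exists>i. Suc i < length p \<and> {p ! i, p ! Suc i} = {x, y}))"

definition same_cycle_comp :: "('a \<Rightarrow> 'a \<Rightarrow> bool) \<Rightarrow> 'a list set \<Rightarrow> 'a \<Rightarrow> 'a \<Rightarrow> bool" where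
  "same_cycle_comp E S x y \<longleftrightarrow> (\<exists>p\<in>S. cycle_comp E p \<and> x \<in> set p \<and> y \<in> set p)"

definition free_edge :: "('a \<Rightarrow> 'a \<Rightarrow> bool) \<Rightarrow> 'a list set \<Rightarrow> 'a \<Rightarrow> 'a \<Rightarrow> bool" where
  "free_edge E S x y \<longleftrightarrow> E x y \<and> \<not> path_neighbors E S x y \<and> \<not> same_cycle_comp E S x y"

definition V1 :: "('a \<Rightarrow> 'a \<Rightarrow> bool) \<Rightarrow> 'a list set \<Rightarrow> 'a set" where
  "V1 E S = {v. \<exists>p\<in>S. (path_comp E p \<and> (v = hd p \<or> v = last p)) \<or> (cycle_comp E p \<and> v \<in> set p)}"

definition V2 :: "'a set \<Rightarrow> ('a \<Rightarrow> 'a \<Rightarrow> bool) \<Rightarrow> 'a list set \<Rightarrow> 'a set" where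
  "V2 V E S = {x\<in>V. x \<notin> V1 E S \<and> (\<exists>y\<in>V1 E S. free_edge E S x y)}"

definition goes_to :: "'a set \<Rightarrow> ('a \<Rightarrow> 'a \<Rightarrow> bool) \<Rightarrow> 'a list set \<Rightarrow> 'a \<Rightarrow> 'a \<Rightarrow> bool" where
  "goes_to V E S x y \<longleftrightarrow> x \<in> V2 V E S \<and> y \<in> V1 E S \<and> free_edge E S x y"

end

theory Submission
  imports Defs
begin

text \<open>Cut P between its consecutive vertices x1 = P!i and x2 = P!(i+1).  The initial
  segment ending in x1, followed by the cycle C entered at a neighbour c of x1, is a path.
  If x2 went to the start o1 of P, closing it with the reversed final segment would cover
  P and C by one path; if x2 went to an end y of a third component D (or, for a cycle D,
  to any vertex, after opening D at y), the two paths "D then final segment" and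
  "initial segment then C" would cover three components.  Both contradict the
  minimality of the number of components.\<close>

definition minimum_path_partition :: "'a set \<Rightarrow> ('a \<Rightarrow> 'a \<Rightarrow> bool) \<Rightarrow> 'a list set \<Rightarrow> bool" where
  "minimum_path_partition V E S \<longleftrightarrow>
     path_partition V E S \<and> (\<forall>S'. path_partition V E S' \<longrightarrow> card S \<le> card S')"

lemma canonical_imp_minimum_path_partition:
  "canonical V E S \<Longrightarrow> minimum_path_partition V E S"
  by (simp add: canonical_def minimum_path_partition_def)

lemma is_path_append:
  assumes "is_path E a" "is_path E b" "set a \<inter> set b = {}" "E (last a) (hd b)"
  shows "is_path E (a @ b)"
  unfolding is_path_def
proof (intro conjI allI impI)
  show "a @ b \<noteq> []" "distinct (a @ b)" using assms by (auto simp: is_path_def)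
  fix j assume j: "Suc j < length (a @ b)"
  have "a \<noteq> []" "b \<noteq> []" using assms by (auto simp: is_path_def)
  consider "Suc j < length a" | "Suc j = length a" | "length a \<le> j" by linarith
  then show "E ((a @ b) ! j) ((a @ b) ! Suc j)"
  proof cases
    case 1
    then show ?thesis using assms(1) by (simp add: nth_append is_path_def)
  next
    case 2
    then have "j = length a - 1" by simp
    then have "(a @ b) ! j = last a" "(a @ b) ! Suc j = hd b"
      using 2 \<open>a \<noteq> []\<close> \<open>b \<noteq> []\<close> by (auto simp: nth_append last_conv_nth hd_conv_nth)
    then show ?thesis using assms(4) by simp
  next
    case 3
    then obtain m where "j = length a + m" using le_Suc_ex by blast
    then show ?thesis using assms(2) j by (simp add: nth_append is_path_def)
  qed
qed

lemma is_path_rev: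
  assumes "is_path E p" and sym: "\<And>x y. E x y \<Longrightarrow> E y x"
  shows "is_path E (rev p)"
  unfolding is_path_def
proof (intro conjI allI impI)
  show "rev p \<noteq> []" "distinct (rev p)" using assms(1) by (auto simp: is_path_def)
  fix j assume j: "Suc j < length (rev p)"
  define m where "m = length p - Suc (Suc j)"
  have "Suc m < length p" using j by (simp add: m_def)
  then have "E (p ! m) (p ! Suc m)" using assms(1) unfolding is_path_def by blast
  moreover have "rev p ! j = p ! Suc m" "rev p ! Suc j = p ! m"
    using j by (auto simp: rev_nth m_def Suc_diff_Suc)
  ultimately show "E (rev p ! j) (rev p ! Suc j)" using sym by simp
qed

lemma is_path_take: "is_path E p \<Longrightarrow> 0 < n \<Longrightarrow> is_path E (take n p)"
  unfolding is_path_def by auto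

lemma is_path_drop: "is_path E p \<Longrightarrow> n < length p \<Longrightarrow> is_path E (drop n p)"
  unfolding is_path_def by auto

lemma is_path_split:
  assumes "is_path E P" "Suc i < length P"
  obtains A B where "P = A @ B" "is_path E A" "is_path E B" "last A = P ! i" "hd B = P ! Suc i"
proof
  show "P = take (Suc i) P @ drop (Suc i) P" by simp
  show "is_path E (take (Suc i) P)" using is_path_take[OF assms(1)] by simp
  show "is_path E (drop (Suc i) P)" using is_path_drop[OF assms] .
  show "last (take (Suc i) P) = P ! i" using assms(2) by (simp add: take_Suc_conv_app_nth)
  show "hd (drop (Suc i) P) = P ! Suc i" using assms(2) by (simp add: hd_drop_conv_nth)
qed

lemma spanning_cycle_path_from:
  assumes "has_spanning_cycle E A" "v \<in> A"
  obtains r where "is_path E r" "set r = A" "hd r = v"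
proof -
  obtain q where q: "distinct q" "set q = A" "3 \<le> length q"
    "\<forall>i. Suc i < length q \<longrightarrow> E (q ! i) (q ! Suc i)" "E (last q) (hd q)"
    using assms(1) unfolding has_spanning_cycle_def by blast
  obtain k where k: "k < length q" "q ! k = v" using assms(2) q(2) by (metis in_set_conv_nth)
  have pq: "is_path E q" using q unfolding is_path_def by auto
  have d: "is_path E (drop k q)" "hd (drop k q) = v"
    using is_path_drop[OF pq k(1)] k by (auto simp: hd_drop_conv_nth)
  show thesis
  proof (cases "k = 0")
    case True
    then show ?thesis using that d q(2) by auto
  next
    case False
    have "is_path E (drop k q @ take k q)"
    proof (rule is_path_append[OF d(1) is_path_take[OF pq]])
      show "set (drop k q) \<inter> set (take k q) = {}"
        using q(1) by (metis distinct_append append_take_drop_id inf_commute)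
      show "E (last (drop k q)) (hd (take k q))" using q(5) k False by (simp add: hd_take)
    qed (use False in simp)
    moreover have "set (drop k q @ take k q) = A"
      using q(2) by (metis Un_commute append_take_drop_id set_append)
    ultimately show ?thesis using that d(2) k by simp
  qed
qed

lemma spanning_cycle_path_to:
  assumes "has_spanning_cycle E A" "v \<in> A" and sym: "\<And>x y. E x y \<Longrightarrow> E y x"
  obtains r where "is_path E r" "set r = A" "last r = v"
proof -
  obtain r where r: "is_path E r" "set r = A" "hd r = v"
    using spanning_cycle_path_from[OF assms(1,2)] .
  moreover have "last (rev r) = v" using r by (simp add: is_path_def last_rev)
  ultimately show thesis using that is_path_rev[OF r(1) sym] by simp
qed

lemma path_append_spanning_cycle:
  assumes "is_path E a" "has_spanning_cycle E A" "c \<in> A" "E (last a) c" "set a \<inter> A = {}"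
  obtains r where "is_path E r" "set r = set a \<union> A" "hd r = hd a"
proof -
  obtain q where q: "is_path E q" "set q = A" "hd q = c"
    using spanning_cycle_path_from[OF assms(2,3)] .
  have "is_path E (a @ q)" using assms q by (intro is_path_append) auto
  then show thesis using that[of "a @ q"] q(2) assms(1) by (auto simp: is_path_def)
qed

lemma path_partition_disjoint:
  "path_partition V E S \<Longrightarrow> p \<in> S \<Longrightarrow> q \<in> S \<Longrightarrow> p \<noteq> q \<Longrightarrow> set p \<inter> set q = {}"
  unfolding path_partition_def by blast

lemma path_partition_replace:
  assumes "path_partition V E S" "R \<subseteq> S"
    and "\<forall>p\<in>N. is_path E p" "\<forall>p\<in>N. \<forall>q\<in>N. p \<noteq> q \<longrightarrow> set p \<inter> set q = {}"
    and "finite N" "(\<Union>p\<in>N. set p) = (\<Union>p\<in>R. set p)"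
  shows "path_partition V E ((S - R) \<union> N)"
proof -
  have new_old: "set p \<inter> set q = {}" if "p \<in> S - R" "q \<in> N" for p q
  proof -
    have "set p \<inter> set r = {}" if "r \<in> R" for r
      using path_partition_disjoint[OF assms(1), of p r] \<open>p \<in> S - R\<close> that assms(2) by blast
    then show ?thesis using that(2) assms(6) by blast
  qed
  have "set p \<inter> set q = {}" if "p \<in> (S - R) \<union> N" "q \<in> (S - R) \<union> N" "p \<noteq> q" for p q
    using that path_partition_disjoint[OF assms(1), of p q] assms(4) new_old[of p q] new_old[of q p]
    by (auto simp: Int_commute)
  moreover have "(\<Union>p\<in>(S - R) \<union> N. set p) = (\<Union>p\<in>S - R. set p) \<union> (\<Union>p\<in>R. set p)"
    using assms(6) by simp
  moreover have "\<dots> = V" using assms(1,2) unfolding path_partition_def by auto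
  moreover have "finite ((S - R) \<union> N)" "\<forall>p\<in>(S - R) \<union> N. is_path E p"
    using assms(1,3,5) by (auto simp: path_partition_def)
  ultimately show ?thesis unfolding path_partition_def by simp
qed

lemma minimum_path_partition_replace_card_le:
  assumes "minimum_path_partition V E S" "R \<subseteq> S"
    and "\<forall>p\<in>N. is_path E p" "\<forall>p\<in>N. \<forall>q\<in>N. p \<noteq> q \<longrightarrow> set p \<inter> set q = {}"
    and "finite N" "(\<Union>p\<in>N. set p) = (\<Union>p\<in>R. set p)"
  shows "card R \<le> card N"
proof -
  have pp: "path_partition V E S" and fin: "finite S"
    using assms(1) by (auto simp: minimum_path_partition_def path_partition_def)
  have "card S \<le> card ((S - R) \<union> N)"
    using assms(1) path_partition_replace[OF pp assms(2-6)]
    by (simp add: minimum_path_partition_def)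
  also have "\<dots> \<le> card (S - R) + card N" by (rule card_Un_le)
  also have "card (S - R) = card S - card R"
    using assms(2) fin by (meson card_Diff_subset finite_subset)
  finally show ?thesis using card_mono[OF fin assms(2)] by linarith
qed

lemma minimum_path_partition_no_merge_at_start:
  assumes "minimum_path_partition V E S" and sym: "\<And>x y. E x y \<Longrightarrow> E y x"
    and "Q \<in> S" "C \<in> S" "Q \<noteq> C" "is_path E P" "set P = set Q"
    and "has_spanning_cycle E (set C)" "c \<in> set C" "Suc i < length P"
    and "E (P ! i) c" "E (P ! Suc i) (hd P)"
  shows False
proof -
  obtain A B where AB: "P = A @ B" "is_path E A" "is_path E B" "last A = P ! i" "hd B = P ! Suc i"
    using is_path_split[OF assms(6,10)] .
  have PC: "set P \<inter> set C = {}"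
    using assms(1,3-5,7) path_partition_disjoint by (metis minimum_path_partition_def)
  have "set A \<inter> set B = {}" using assms(6) AB(1) by (metis distinct_append is_path_def)
  have "hd A = hd P" using AB(1,2) by (simp add: is_path_def)
  have "E (last A) c" "set A \<inter> set C = {}" using AB(1,4) assms(11) PC by auto
  then obtain AC where AC: "is_path E AC" "set AC = set A \<union> set C" "hd AC = hd A"
    using path_append_spanning_cycle[OF AB(2) assms(8,9)] by blast
  have "is_path E (rev B @ AC)"
  proof (rule is_path_append[OF is_path_rev[OF AB(3) sym] AC(1)])
    show "set (rev B) \<inter> set AC = {}"
      using AC(2) AB(1) PC \<open>set A \<inter> set B = {}\<close> by auto
    have "last (rev B) = P ! Suc i" using AB(3,5) by (simp add: is_path_def last_rev)
    then show "E (last (rev B)) (hd AC)" using AC(3) \<open>hd A = hd P\<close> assms(12) by simp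
  qed
  moreover have "set (rev B @ AC) = set Q \<union> set C" using AC(2) AB(1) assms(7) by auto
  ultimately have "card {Q, C} \<le> card {rev B @ AC}"
    using assms(3,4) by (intro minimum_path_partition_replace_card_le[OF assms(1)]) auto
  then show False using assms(5) by simp
qed

lemma minimum_path_partition_no_merge_via_third:
  assumes "minimum_path_partition V E S" and sym: "\<And>x y. E x y \<Longrightarrow> E y x"
    and "Q \<in> S" "C \<in> S" "D \<in> S" "Q \<noteq> C" "D \<noteq> Q" "D \<noteq> C"
    and "is_path E P" "set P = set Q"
    and "has_spanning_cycle E (set C)" "c \<in> set C" "Suc i < length P"
    and "is_path E D'" "set D' = set D"
    and "E (P ! i) c" "E (P ! Suc i) (last D')"
  shows False
proof -
  obtain A B where AB: "P = A @ B" "is_path E A" "is_path E B" "last A = P ! i" "hd B = P ! Suc i"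
    using is_path_split[OF assms(9,13)] .
  have pp: "path_partition V E S" using assms(1) by (simp add: minimum_path_partition_def)
  have disj: "set P \<inter> set C = {}" "set D \<inter> set P = {}" "set D \<inter> set C = {}"
    using path_partition_disjoint[OF pp] assms(3-8,10) by metis+
  have "set A \<inter> set B = {}" using assms(9) AB(1) by (metis distinct_append is_path_def)
  have "E (last A) c" "set A \<inter> set C = {}" using AB(1,4) assms(16) disj(1) by auto
  then obtain AC where AC: "is_path E AC" "set AC = set A \<union> set C"
    using path_append_spanning_cycle[OF AB(2) assms(11,12)] by blast
  have "is_path E (D' @ B)"
    using is_path_append[OF assms(14) AB(3)] AB(1,5) assms(15,17) disj(2) sym by auto
  let ?N = "{AC, D' @ B}"
  have "card {Q, C, D} \<le> card ?N"
  proof (rule minimum_path_partition_replace_card_le[OF assms(1)])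
    show "\<forall>p\<in>?N. \<forall>q\<in>?N. p \<noteq> q \<longrightarrow> set p \<inter> set q = {}"
      using AB(1) AC(2) disj assms(15) \<open>set A \<inter> set B = {}\<close> by auto
    show "(\<Union>p\<in>?N. set p) = (\<Union>p\<in>{Q, C, D}. set p)"
      using AB(1) AC(2) assms(10,15) by auto
  qed (use assms(3-5) AC(1) \<open>is_path E (D' @ B)\<close> in auto)
  moreover have "card ?N \<le> 2" by (simp add: card_insert_le_m1)
  ultimately show False using assms(6-8) by simp
qed

lemma V1_component_path_to:
  assumes "y \<in> V1 E S" "path_partition V E S" and sym: "\<And>x y. E x y \<Longrightarrow> E y x"
  obtains D D' where "D \<in> S" "is_path E D'" "set D' = set D" "last D' = y"
    "path_comp E D \<Longrightarrow> y = hd D \<or> y = last D"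
proof -
  obtain D where D: "D \<in> S"
    "(path_comp E D \<and> (y = hd D \<or> y = last D)) \<or> (cycle_comp E D \<and> y \<in> set D)"
    using assms(1) by (auto simp: V1_def)
  have "is_path E D" using D(1) assms(2) by (simp add: path_partition_def)
  show thesis
  proof (cases "cycle_comp E D")
    case True
    then have cyc: "has_spanning_cycle E (set D)" "y \<in> set D"
      using D(2) by (auto simp: cycle_comp_def path_comp_def)
    obtain D' where D': "is_path E D'" "set D' = set D" "last D' = y"
      using spanning_cycle_path_to[OF cyc sym] .
    show ?thesis by (rule that[OF D(1) D']) (use True in \<open>simp add: path_comp_def\<close>)
  next
    case False
    then consider "y = last D" | "y = hd D" using D(2) by blast
    then show ?thesis
    proof cases
      case 1
      then show ?thesis using that[OF D(1) \<open>is_path E D\<close>] by blast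
    next
      case 2
      then have "last (rev D) = y" using \<open>is_path E D\<close> by (simp add: is_path_def last_rev)
      then show ?thesis using that[OF D(1) is_path_rev[OF \<open>is_path E D\<close> sym]] 2 by simp
    qed
  qed
qed

lemma minimum_path_partition_V1_neighbour_of_successor:
  assumes min: "minimum_path_partition V E S" and sym: "\<And>x y. E x y \<Longrightarrow> E y x"
    and Q: "Q \<in> S" "Q = P \<or> Q = rev P" "path_comp E Q"
    and C: "C \<in> S" "cycle_comp E C" "c \<in> set C"
    and "Suc i < length P" "E (P ! i) c" "E (P ! Suc i) y" "y \<in> V1 E S"
  shows "y = last P \<or> y \<in> set C"
proof -
  have pp: "path_partition V E S" using min by (simp add: minimum_path_partition_def)
  have "is_path E Q" using Q(1) pp by (simp add: path_partition_def)
  then have "is_path E P" using Q(2) is_path_rev[OF \<open>is_path E Q\<close> sym] by auto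
  have "set P = set Q" "P \<noteq> []" using Q(2) \<open>is_path E P\<close> by (auto simp: is_path_def)
  have "Q \<noteq> C" using Q(3) C(2) by (auto simp: path_comp_def)
  have cyc: "has_spanning_cycle E (set C)" using C(2) by (simp add: cycle_comp_def)
  obtain D D' where D: "D \<in> S" "is_path E D'" "set D' = set D" "last D' = y"
    "path_comp E D \<Longrightarrow> y = hd D \<or> y = last D"
    using V1_component_path_to[OF assms(12) pp sym] by blast
  consider "D = Q" | "D = C" | "D \<noteq> Q" "D \<noteq> C" by blast
  then show ?thesis
  proof cases
    case 1
    then have "y = hd P \<or> y = last P"
      using D(5) Q(2,3) \<open>P \<noteq> []\<close> by (auto simp: hd_rev last_rev)
    then show ?thesis
      using minimum_path_partition_no_merge_at_start[OF min sym Q(1) C(1) \<open>Q \<noteq> C\<close>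
          \<open>is_path E P\<close> \<open>set P = set Q\<close> cyc C(3) assms(9,10)] assms(11) by blast
  next
    case 2
    then show ?thesis using D(2-4) by (auto simp: is_path_def)
  next
    case 3
    then show ?thesis
      using minimum_path_partition_no_merge_via_third[OF min sym Q(1) C(1) D(1) \<open>Q \<noteq> C\<close> _ _
          \<open>is_path E P\<close> \<open>set P = set Q\<close> cyc C(3) assms(9) D(2,3) assms(10)] assms(11) D(4)
      by blast
  qed
qed

theorem mainTheorem8:
  fixes V :: "'a set" and E :: "'a \<Rightarrow> 'a \<Rightarrow> bool" and S :: "'a list set"
    and P C :: "'a list" and i :: nat and c :: 'a
  assumes "simple_graph V E"
    and "regular 6 V E"
    and "canonical V E S"
    and "P \<in> S \<or> rev P \<in> S"
    and "path_comp E P"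
    and "Suc i < length P"
    and "P ! i \<in> V2 V E S" and "P ! Suc i \<in> V2 V E S"
    and "C \<in> S" and "cycle_comp E C"
    and "c \<in> set C" and "goes_to V E S (P ! i) c"
  shows "\<forall>y. goes_to V E S (P ! Suc i) y \<longrightarrow> y = last P \<or> y \<in> set C"
proof (intro allI impI)
  fix y assume "goes_to V E S (P ! Suc i) y"
  then have edges: "E (P ! i) c" "E (P ! Suc i) y" "y \<in> V1 E S"
    using assms(12) by (auto simp: goes_to_def free_edge_def)
  have sym: "\<And>x y. E x y \<Longrightarrow> E y x" using assms(1) by (simp add: simple_graph_def)
  obtain Q where Q: "Q \<in> S" "Q = P \<or> Q = rev P" using assms(4) by blast
  then have "path_comp E Q"
    using assms(5) by (auto simp: path_comp_def cycle_comp_def isolated_comp_def)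
  show "y = last P \<or> y \<in> set C"
    using minimum_path_partition_V1_neighbour_of_successor[OF
        canonical_imp_minimum_path_partition[OF assms(3)] sym Q \<open>path_comp E Q\<close>
        assms(9-11,6) edges] .
qed

end
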